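(* Let $\kappa$ be a regular infinite cardinal. If a Boolean algebra $B$ has the $\kappa$-FN, then $c(B)\le 2^{<\kappa}$ and $\mathrm{Length}(B)\le 2^{<\kappa}$.
   Context: For an infinite cardinal $\kappa$, a Boolean algebra $B$ has the $\kappa$-Freese–Nation property ($\kappa$-FN) if there is a map $f:B\to[B]^{<\kappa}$ such that for all $a,b\in B$ with $a\le b$ there is $c\in f(a)\cap f(b)$ with $a\le c\le b$. $c(B)$ (cellularity) is the supremum of cardinalities of sets of pairwise disjoint nonzero elements of $B$; $\mathrm{Length}(B)$ is the supremum of cardinalities of subsets of $B$ linearly ordered by the Boolean order. *)

theory Defs
  imports Main
begin

definition FN_property :: "'k rel \<Rightarrow> ('a::boolean_algebra) itself \<Rightarrow> bool" where
  "FN_property \<kappa> _ \<longleftrightarrow> (\<exists>f :: 'a \<Rightarrow> 'a set.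
      (\<forall>a. (card_of (f a), \<kappa>) \<in> ordLess) \<and>
      (\<forall>a b. a \<le> b \<longrightarrow> (\<exists>c \<in> f a \<inter> f b. a \<le> c \<and> c \<le> b)))"

definition pairwise_disjoint_nonzero :: "('a::boolean_algebra) set \<Rightarrow> bool" where
  "pairwise_disjoint_nonzero A \<longleftrightarrow>
     (\<forall>x\<in>A. x \<noteq> bot) \<and> (\<forall>x\<in>A. \<forall>y\<in>A. x \<noteq> y \<longrightarrow> inf x y = bot)"

definition is_chain :: "('a::order) set \<Rightarrow> bool" where
  "is_chain C \<longleftrightarrow> (\<forall>x\<in>C. \<forall>y\<in>C. x \<le> y \<or> y \<le> x)"

text \<open>The set \<open>2^{<\<kappa>}\<close>: all 0/1-sequences of length \<open>\<alpha> < \<kappa>\<close>, represented as subsets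
  of proper initial segments of \<kappa>; its cardinality is \<open>2^{<\<kappa>}\<close>.\<close>
definition two_lt :: "'k rel \<Rightarrow> ('k \<times> 'k set) set" where
  "two_lt \<kappa> = {(a, A). a \<in> Field \<kappa> \<and> A \<subseteq> underS \<kappa> a}"

end

theory Submission
  imports Defs
begin

text \<open>Associate with every element \<open>x\<close> the fewer than \<kappa> tests \<open>c \<le> z\<close> and \<open>z \<le> c\<close> for
  \<open>c \<in> f x \<union> f (-x)\<close>, where \<open>f\<close> is a \<kappa>-FN map. Applied to \<open>x \<le> -y\<close> (disjoint \<open>x, y\<close>) or to
  \<open>x \<le> y\<close> (comparable \<open>x, y\<close>), the FN property yields a test shared by \<open>x\<close> and \<open>y\<close> that tells them
  apart. Any set \<open>X\<close> with such small, locally separating test sets has at most \<open>2\<^sup><\<^sup>\<kappa>\<close>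
  elements: for \<open>x \<in> X\<close> run a process of length \<kappa> that asks, one per stage, every test of
  every point chosen so far, and when no test is pending chooses a point of \<open>X\<close> answering all
  tests asked so far like \<open>x\<close>. By regularity of \<kappa> every test is asked eventually, and after
  all tests of \<open>x\<close> have been asked the next chosen point can only be \<open>x\<close> itself, say at stage
  \<open>p\<close>. Since the run depends on \<open>x\<close> only through its answers, \<open>x\<close> is determined by \<open>p\<close> together
  with the set of stages before \<open>p\<close> whose test \<open>x\<close> passes.\<close>

unbundle cardinal_syntax

locale separating_tests =
  fixes \<kappa> :: "'k rel" and X :: "'a set"
    and tests :: "'a \<Rightarrow> 'q set" and holds :: "'q \<Rightarrow> 'a \<Rightarrow> bool"
  assumes card_order: "Card_order \<kappa>" and infinite_field: "\<not> finite (Field \<kappa>)"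
    and regular: "regularCard \<kappa>"
    and tests_small: "\<And>x. x \<in> X \<Longrightarrow> |tests x| <o \<kappa>"
    and tests_separate: "\<And>x y. x \<in> X \<Longrightarrow> y \<in> X \<Longrightarrow> x \<noteq> y \<Longrightarrow>
      \<exists>q \<in> tests x \<inter> tests y. holds q x \<noteq> holds q y"
begin

sublocale wo_rel \<kappa>
  using card_order by (simp add: card_order_on_well_order_on wo_rel_def)

text \<open>A run is a \<kappa>-sequence whose entries are tests asked (\<open>Inl\<close>) or points chosen (\<open>Inr\<close>);
  a chosen point counts as a failed test.\<close>

fun answer :: "'q + 'a \<Rightarrow> 'a \<Rightarrow> bool" where
  "answer (Inl q) z = holds q z"
| "answer (Inr _) z = False"

definition asked :: "('k \<Rightarrow> 'q + 'a) \<Rightarrow> 'k \<Rightarrow> 'q set" where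
  "asked g i = {q. \<exists>j \<in> underS i. g j = Inl q}"

definition chosen :: "('k \<Rightarrow> 'q + 'a) \<Rightarrow> 'k \<Rightarrow> 'a set" where
  "chosen g i = {y. \<exists>j \<in> underS i. g j = Inr y}"

definition pending :: "('k \<Rightarrow> 'q + 'a) \<Rightarrow> 'k \<Rightarrow> 'q set" where
  "pending g i = (\<Union>y \<in> chosen g i. tests y) - asked g i"

definition next_entry :: "'a \<Rightarrow> ('k \<Rightarrow> 'q + 'a) \<Rightarrow> 'k \<Rightarrow> 'q + 'a" where
  "next_entry x g i =
    (if pending g i = {}
     then Inr (SOME y. y \<in> X \<and> (\<forall>j \<in> underS i. answer (g j) y = answer (g j) x))
     else Inl (SOME q. q \<in> pending g i))"

definition run :: "'a \<Rightarrow> 'k \<Rightarrow> 'q + 'a" where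
  "run x = worec (next_entry x)"

lemma run_unfold: "run x i = next_entry x (run x) i"
proof -
  have "next_entry x f i = next_entry x g i" if "\<forall>j \<in> underS i. f j = g j" for f g i
  proof -
    have "asked f i = asked g i" "chosen f i = chosen g i"
      using that unfolding asked_def chosen_def by auto
    then show ?thesis using that unfolding next_entry_def pending_def by simp
  qed
  then have "adm_wo (next_entry x)" unfolding adm_wo_def by blast
  then show ?thesis unfolding run_def by (metis worec_fixpoint)
qed

lemma run_eq_if_answers_agree:
  assumes "\<forall>k \<in> underS i. answer (run x k) x = answer (run y k) y"
  shows "run x i = run y i"
  using assms
proof (induction i rule: well_order_induct)
  case (1 i)
  have below: "run x k = run y k" if "k \<in> underS i" for k
  proof -
    have "underS k \<subseteq> underS i" using that underS_incr[OF TRANS ANTISYM] underS_E by metis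
    then have "\<forall>m \<in> underS k. answer (run x m) x = answer (run y m) y" using "1.prems" by blast
    moreover have "k \<noteq> i \<and> (k, i) \<in> \<kappa>" using underS_E[OF that] .
    ultimately show ?thesis using "1.IH" by blast
  qed
  then have "asked (run x) i = asked (run y) i" "chosen (run x) i = chosen (run y) i"
    unfolding asked_def chosen_def by auto
  then have "pending (run x) i = pending (run y) i" unfolding pending_def by simp
  moreover have "(\<forall>j \<in> underS i. answer (run x j) z = answer (run x j) x) \<longleftrightarrow>
      (\<forall>j \<in> underS i. answer (run y j) z = answer (run y j) y)" for z
    using below "1.prems" by auto
  ultimately have "next_entry x (run x) i = next_entry y (run y) i"
    unfolding next_entry_def by simp
  then show ?case using run_unfold by metis
qed

lemma pending_empty_iff: "pending (run x) i = {} \<longleftrightarrow> \<not> isl (run x i)"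
  using run_unfold[of x i] unfolding next_entry_def by simp

lemma run_Inl: "run x i = Inl q \<Longrightarrow> q \<in> pending (run x) i"
  using run_unfold[of x i] unfolding next_entry_def by (auto split: if_splits intro: someI)

lemma run_Inr:
  assumes "x \<in> X" and "run x i = Inr y"
  shows "y \<in> X \<and> (\<forall>j \<in> underS i. answer (run x j) y = answer (run x j) x)"
proof -
  let ?agrees = "\<lambda>y. y \<in> X \<and> (\<forall>j \<in> underS i. answer (run x j) y = answer (run x j) x)"
  have "y = (SOME y. ?agrees y)"
    using assms(2) run_unfold[of x i] unfolding next_entry_def by (simp split: if_splits)
  moreover have "?agrees x" using assms(1) by simp
  ultimately show ?thesis using someI[of ?agrees x] by simp
qed

lemma asked_once:
  assumes "run x j = Inl q" and "run x j' = Inl q" and "j \<in> underS j'"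
  shows False
proof -
  have "q \<in> asked (run x) j'" using assms(1,3) unfolding asked_def by blast
  then show False using run_Inl[OF assms(2)] unfolding pending_def by blast
qed

lemma inj_on_asked: "inj_on (\<lambda>j. projl (run x j)) {j \<in> Field \<kappa>. isl (run x j)}"
proof (rule inj_onI)
  fix j j' assume "j \<in> {j \<in> Field \<kappa>. isl (run x j)}" "j' \<in> {j \<in> Field \<kappa>. isl (run x j)}"
    and "projl (run x j) = projl (run x j')"
  then obtain q where "run x j = Inl q" "run x j' = Inl q" "j \<in> Field \<kappa>" "j' \<in> Field \<kappa>"
    by (metis (mono_tags) isl_def mem_Collect_eq sum.sel(1))
  then show "j = j'" using TOTALS asked_once underS_I by metis
qed

lemma card_of_under_ordLess:
  assumes "a \<in> Field \<kappa>"
  shows "|under a| <o \<kappa>"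
proof -
  have "|{a}| <o \<kappa>"
    using finite_ordLess_infinite[OF card_of_Well_order WELL, of "{a}"] infinite_field
    by (simp add: Field_card_of)
  then have "|underS a \<union> {a}| <o \<kappa>"
    using card_of_Un_ordLess_infinite_Field[OF infinite_field card_order]
      card_of_underS[OF card_order assms] by blast
  then show ?thesis using Refl_under_underS[OF REFL assms] by simp
qed

lemma Field_subset_under_Un_aboveS:
  assumes "a \<in> Field \<kappa>"
  shows "Field \<kappa> \<subseteq> under a \<union> aboveS a"
proof
  fix j assume "j \<in> Field \<kappa>"
  then have "(j, a) \<in> \<kappa> \<or> (a, j) \<in> \<kappa>" using TOTALS assms by blast
  then show "j \<in> under a \<union> aboveS a" unfolding under_def aboveS_def by blast
qed

lemma bounded_if_card_ordLess:
  assumes "K \<subseteq> Field \<kappa>" and "|K| <o \<kappa>"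
  shows "\<exists>b \<in> Field \<kappa>. K \<subseteq> under b"
proof -
  have "\<not> cofinal K \<kappa>"
    using assms regular not_ordLess_ordIso unfolding regularCard_def by blast
  then obtain b where b: "b \<in> Field \<kappa>" and "\<forall>k \<in> K. b = k \<or> (b, k) \<notin> \<kappa>"
    unfolding cofinal_def by blast
  then have "K \<inter> aboveS b = {}" unfolding aboveS_def by auto
  then show ?thesis using b assms(1) Field_subset_under_Un_aboveS[OF b] by blast
qed

lemma eventually_nothing_pending:
  assumes x: "x \<in> X" and b: "b \<in> Field \<kappa>"
  shows "\<exists>p \<in> aboveS b. pending (run x) p = {}"
proof (rule ccontr)
  assume "\<not> ?thesis"
  then have asking: "isl (run x p)" if "p \<in> aboveS b" for p
    using that pending_empty_iff by blast
  define early where "early = {y. \<exists>j \<in> under b. run x j = Inr y}"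
  have "early \<subseteq> (\<lambda>j. projr (run x j)) ` under b" unfolding early_def by force
  then have "|early| \<le>o |under b|"
    using card_of_mono1[of early] card_of_image ordLeq_transitive by metis
  then have "|early| <o \<kappa>" using card_of_under_ordLess[OF b] ordLeq_ordLess_trans by blast
  moreover have "early \<subseteq> X" unfolding early_def using run_Inr[OF x] by blast
  moreover have "Cinfinite \<kappa>" using card_order infinite_field cinfinite_def by blast
  ultimately have early_tests: "|\<Union>y \<in> early. tests y| <o \<kappa>"
    using card_of_UNION_ordLess_infinite_Field_regularCard[OF regular] tests_small by blast
  have "chosen (run x) p \<subseteq> early" if "p \<in> aboveS b" for p
  proof
    fix y assume "y \<in> chosen (run x) p"
    then obtain j where j: "j \<in> underS p" "run x j = Inr y" unfolding chosen_def by blast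
    then have "j \<notin> aboveS b" using asking by fastforce
    moreover have "j \<in> Field \<kappa>" using j(1) underS_Field by fast
    ultimately have "j \<in> under b" using Field_subset_under_Un_aboveS[OF b] by blast
    then show "y \<in> early" unfolding early_def using j(2) by blast
  qed
  then have "projl (run x p) \<in> (\<Union>y \<in> early. tests y)" if "p \<in> aboveS b" for p
    using run_Inl[of x p "projl (run x p)"] asking[OF that] that unfolding pending_def by auto
  moreover have "inj_on (\<lambda>p. projl (run x p)) (aboveS b)"
    by (rule inj_on_subset[OF inj_on_asked]) (auto simp: asking aboveS_def intro: FieldI2)
  ultimately have "|aboveS b| \<le>o |\<Union>y \<in> early. tests y|"
    unfolding card_of_ordLeq[symmetric] by blast
  then have "|aboveS b| <o \<kappa>" using early_tests ordLeq_ordLess_trans by blast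
  then have "|under b \<union> aboveS b| <o \<kappa>"
    using card_of_Un_ordLess_infinite_Field[OF infinite_field card_order]
      card_of_under_ordLess[OF b] by blast
  moreover note Field_subset_under_Un_aboveS[OF b]
  ultimately have "|Field \<kappa>| <o \<kappa>" using card_of_mono1 ordLeq_ordLess_trans by blast
  then show False using card_of_Field_ordIso[OF card_order] not_ordLess_ordIso by blast
qed

lemma chosen_tests_eventually_asked:
  assumes x: "x \<in> X" and y: "run x p = Inr y" "p \<in> Field \<kappa>" and q: "q \<in> tests y"
  shows "\<exists>j \<in> Field \<kappa>. run x j = Inl q"
proof -
  obtain p' where p': "p' \<in> aboveS p" "pending (run x) p' = {}"
    using eventually_nothing_pending[OF x y(2)] by blast
  then have "p \<in> underS p'" unfolding aboveS_def underS_def by blast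
  then have "y \<in> chosen (run x) p'" using y(1) unfolding chosen_def by blast
  then have "q \<in> asked (run x) p'" using p'(2) q unfolding pending_def by blast
  then show ?thesis unfolding asked_def using underS_Field by fast
qed

lemma eventually_chosen:
  assumes x: "x \<in> X"
  shows "\<exists>p \<in> Field \<kappa>. run x p = Inr x"
proof -
  define asks_x where "asks_x = {j \<in> Field \<kappa>. isl (run x j) \<and> projl (run x j) \<in> tests x}"
  have "inj_on (\<lambda>j. projl (run x j)) asks_x"
    using inj_on_asked by (rule inj_on_subset) (auto simp: asks_x_def)
  moreover have "(\<lambda>j. projl (run x j)) ` asks_x \<subseteq> tests x" unfolding asks_x_def by blast
  ultimately have "|asks_x| \<le>o |tests x|" unfolding card_of_ordLeq[symmetric] by blast
  then have "|asks_x| <o \<kappa>" using tests_small[OF x] ordLeq_ordLess_trans by blast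
  then obtain b where b: "b \<in> Field \<kappa>" "asks_x \<subseteq> under b"
    using bounded_if_card_ordLess[of asks_x] unfolding asks_x_def by blast
  obtain p where p: "p \<in> aboveS b" "pending (run x) p = {}"
    using eventually_nothing_pending[OF x b(1)] by blast
  then obtain y where y: "run x p = Inr y" using pending_empty_iff sum.collapse(2) by metis
  have p_Field: "p \<in> Field \<kappa>" using p(1) unfolding aboveS_def by (blast intro: FieldI2)
  have "y = x"
  proof (rule ccontr)
    assume "y \<noteq> x"
    then obtain q where q: "q \<in> tests x" "q \<in> tests y" "holds q x \<noteq> holds q y"
      using tests_separate[OF x] run_Inr[OF x y] by blast
    obtain j where j: "j \<in> Field \<kappa>" "run x j = Inl q"
      using chosen_tests_eventually_asked[OF x y p_Field q(2)] by blast
    then have "j \<in> under b" using b(2) q(1) unfolding asks_x_def by auto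
    then have "(j, p) \<in> \<kappa>" using p(1) TRANS unfolding under_def aboveS_def trans_def by blast
    moreover have "j \<noteq> p" using j(2) y by auto
    ultimately have "j \<in> underS p" by (rule underS_I[rotated])
    then have "answer (run x j) y = answer (run x j) x" using run_Inr[OF x y] by blast
    then show False using j(2) q(3) by simp
  qed
  then show ?thesis using y p_Field by blast
qed

theorem card_le_two_lt: "|X| \<le>o |two_lt \<kappa>|"
proof -
  define stage where "stage x = (SOME p. p \<in> Field \<kappa> \<and> run x p = Inr x)" for x
  have stage: "stage x \<in> Field \<kappa> \<and> run x (stage x) = Inr x" if "x \<in> X" for x
  proof -
    have "\<exists>p. p \<in> Field \<kappa> \<and> run x p = Inr x" using eventually_chosen[OF that] by blast
    then show ?thesis unfolding stage_def by (rule someI_ex)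
  qed
  define passed where "passed x = {j \<in> underS (stage x). answer (run x j) x}" for x
  have "(stage x, passed x) \<in> two_lt \<kappa>" if "x \<in> X" for x
    using stage[OF that] by (simp add: two_lt_def passed_def)
  moreover have "inj_on (\<lambda>x. (stage x, passed x)) X"
  proof (rule inj_onI)
    fix x y assume x: "x \<in> X" and y: "y \<in> X" and "(stage x, passed x) = (stage y, passed y)"
    then have same_stage: "stage x = stage y" and "passed x = passed y" by simp_all
    then have "\<forall>j \<in> underS (stage x). answer (run x j) x = answer (run y j) y"
      unfolding passed_def set_eq_iff by auto
    then have "run x (stage x) = run y (stage x)" by (rule run_eq_if_answers_agree)
    then have "Inr x = (Inr y :: 'q + 'a)" using stage[OF x] stage[OF y] same_stage by metis
    then show "x = y" by simp
  qed
  ultimately show ?thesis unfolding card_of_ordLeq[symmetric] by blast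
qed

end

fun order_test :: "'a::order + 'a \<Rightarrow> 'a \<Rightarrow> bool" where
  "order_test (Inl c) z \<longleftrightarrow> c \<le> z"
| "order_test (Inr c) z \<longleftrightarrow> z \<le> c"

definition fn_tests :: "('a::boolean_algebra \<Rightarrow> 'a set) \<Rightarrow> 'a \<Rightarrow> ('a + 'a) set" where
  "fn_tests f x = (f x \<union> f (- x)) <+> (f x \<union> f (- x))"

lemma card_of_fn_tests_ordLess:
  assumes "\<not> finite (Field \<kappa>)" and "Card_order \<kappa>" and "\<And>a. |f a| <o \<kappa>"
  shows "|fn_tests f x| <o \<kappa>"
proof -
  have "|f x \<union> f (- x)| <o \<kappa>"
    using card_of_Un_ordLess_infinite_Field[OF assms(1,2) assms(3) assms(3)] .
  then show ?thesis
    unfolding fn_tests_def using card_of_Plus_ordLess_infinite_Field[OF assms(1,2)] by blast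
qed

lemma fn_tests_separate_disjoint:
  fixes x y :: "'a::boolean_algebra"
  assumes fn: "\<And>a b. a \<le> b \<Longrightarrow> \<exists>c \<in> f a \<inter> f b. a \<le> c \<and> c \<le> b"
    and "y \<noteq> bot" and "inf x y = bot"
  shows "\<exists>q \<in> fn_tests f x \<inter> fn_tests f y. order_test q x \<noteq> order_test q y"
proof -
  have "x \<le> - y" using assms(3) by (simp add: inf_shunt)
  then obtain c where c: "c \<in> f x" "c \<in> f (- y)" "x \<le> c" "c \<le> - y" using fn by blast
  have "\<not> y \<le> c"
  proof
    assume "y \<le> c"
    then have "y \<le> - y" using c(4) by (rule order_trans)
    then show False using assms(2) by (simp add: le_iff_inf)
  qed
  then have "order_test (Inr c) x \<noteq> order_test (Inr c) y" using c(3) by simp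
  moreover have "Inr c \<in> fn_tests f x \<inter> fn_tests f y" using c(1,2) unfolding fn_tests_def by auto
  ultimately show ?thesis by blast
qed

lemma fn_tests_separate_less:
  fixes x y :: "'a::boolean_algebra"
  assumes fn: "\<And>a b. a \<le> b \<Longrightarrow> \<exists>c \<in> f a \<inter> f b. a \<le> c \<and> c \<le> b"
    and "x < y"
  shows "\<exists>q \<in> fn_tests f x \<inter> fn_tests f y. order_test q x \<noteq> order_test q y"
proof -
  obtain c where c: "c \<in> f x" "c \<in> f y" "x \<le> c" "c \<le> y" using fn assms(2) less_imp_le by blast
  have "\<not> (c \<le> x \<and> y \<le> c)" using assms(2) by (meson leD order_trans)
  then have "order_test (Inl c) x \<noteq> order_test (Inl c) y \<or> order_test (Inr c) x \<noteq> order_test (Inr c) y"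
    using c(3,4) by simp
  moreover have "{Inl c, Inr c} \<subseteq> fn_tests f x \<inter> fn_tests f y"
    using c(1,2) unfolding fn_tests_def by auto
  ultimately show ?thesis by blast
qed

theorem corollary4p4:
  fixes \<kappa> :: "'k rel"
  assumes "Card_order \<kappa>" and "\<not> finite (Field \<kappa>)" and "regularCard \<kappa>"
    and "FN_property \<kappa> TYPE('a::boolean_algebra)"
  shows "(\<forall>A :: 'a set. pairwise_disjoint_nonzero A \<longrightarrow> (card_of A, card_of (two_lt \<kappa>)) \<in> ordLeq)
       \<and> (\<forall>C :: 'a set. is_chain C \<longrightarrow> (card_of C, card_of (two_lt \<kappa>)) \<in> ordLeq)"
proof -
  obtain f :: "'a \<Rightarrow> 'a set" where small: "\<And>a. |f a| <o \<kappa>"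
    and fn: "\<And>a b. a \<le> b \<Longrightarrow> \<exists>c \<in> f a \<inter> f b. a \<le> c \<and> c \<le> b"
    using assms(4) unfolding FN_property_def by blast
  have card_le: "|X| \<le>o |two_lt \<kappa>|"
    if "\<And>x y. x \<in> X \<Longrightarrow> y \<in> X \<Longrightarrow> x \<noteq> y \<Longrightarrow>
      \<exists>q \<in> fn_tests f x \<inter> fn_tests f y. order_test q x \<noteq> order_test q y" for X :: "'a set"
    by (rule separating_tests.card_le_two_lt[where tests = "fn_tests f" and holds = order_test],
        unfold_locales)
      (use assms(1-3) that card_of_fn_tests_ordLess[where f = f, OF assms(2,1) small] in blast)+
  have "|A| \<le>o |two_lt \<kappa>|" if A: "pairwise_disjoint_nonzero A" for A :: "'a set"
  proof (rule card_le)
    fix x y assume "x \<in> A" "y \<in> A" "x \<noteq> y"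
    then have "y \<noteq> bot" "inf x y = bot" using A unfolding pairwise_disjoint_nonzero_def by auto
    then show "\<exists>q \<in> fn_tests f x \<inter> fn_tests f y. order_test q x \<noteq> order_test q y"
      using fn_tests_separate_disjoint[where f = f, OF fn] by blast
  qed
  moreover have "|C| \<le>o |two_lt \<kappa>|" if C: "is_chain C" for C :: "'a set"
  proof (rule card_le)
    fix x y assume "x \<in> C" "y \<in> C" "x \<noteq> y"
    then have "x < y \<or> y < x" using C unfolding is_chain_def by (auto simp: less_le)
    then show "\<exists>q \<in> fn_tests f x \<inter> fn_tests f y. order_test q x \<noteq> order_test q y"
      using fn_tests_separate_less[where f = f, OF fn] by blast
  qed
  ultimately show ?thesis by blast
qed

end
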